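(* Let $s\in(0,\infty)$, $r\in\mathbb N$ with $r>s$, $y,y'\in(0,1]$ and $x,x'\in\mathbb R^n$; if $s\ge1$ assume additionally $|x-x'|\le\max\{y,y'\}$. Then there is a constant $C$, depending only on $r$ (and $s,n$), such that for every $f\in\Lambda_s$, $$|\Delta_rf(x,y)-\Delta_rf(x',y')|\le C\|f\|_{\Lambda_s}\times\begin{cases}|x-x'|^s+|y-y'|^s,& s\in(0,1),\\ |x-x'|\log\big(e+\frac{y+y'}{|x-x'|}\big)+|y-y'|\log\big(e+\frac{y+y'}{|y-y'|}\big),& s=1,\\ (y+y')^{s-1}(|y-y'|+|x-x'|),& s\in(1,\infty),\end{cases}$$ where a term of the form $t\log(e+a/t)$ is interpreted as $0$ when $t=0$.
   Context: $\Delta_hf(x):=f(x+h/2)-f(x-h/2)$, $\Delta^{k+1}_h:=\Delta^k_h\Delta_h$, $\Delta_kf(x,y):=\sup_{h\in\mathbb R^n,|h|=y}|\Delta_h^kf(x)|$. $\Lambda_s$: the space of bounded continuous $f$ on $\mathbb R^n$ with $\|f\|_{\Lambda_s}:=\|f\|_{L^\infty}+\sup_{x\in\mathbb R^n,y\in(0,1]}\Delta_{\lfloor s\rfloor+1}f(x,y)/y^s<\infty$. *)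

theory Defs
  imports "HOL-Analysis.Analysis"
begin

definition sdiff :: "'a::real_normed_vector \<Rightarrow> ('a \<Rightarrow> real) \<Rightarrow> 'a \<Rightarrow> real" where
  "sdiff h f x = f (x + (1/2) *\<^sub>R h) - f (x - (1/2) *\<^sub>R h)"

fun sdiff_pow :: "nat \<Rightarrow> 'a::real_normed_vector \<Rightarrow> ('a \<Rightarrow> real) \<Rightarrow> 'a \<Rightarrow> real" where
  "sdiff_pow 0 h f = f"
| "sdiff_pow (Suc k) h f = sdiff_pow k h (sdiff h f)"

definition Delta_k :: "nat \<Rightarrow> ('a::real_normed_vector \<Rightarrow> real) \<Rightarrow> 'a \<Rightarrow> real \<Rightarrow> real" where
  "Delta_k k f x y = (SUP h\<in>{h. norm h = y}. \<bar>sdiff_pow k h f x\<bar>)"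

definition holder_seminorm_set :: "real \<Rightarrow> ('a::real_normed_vector \<Rightarrow> real) \<Rightarrow> real set" where
  "holder_seminorm_set s f =
     {Delta_k (nat \<lfloor>s\<rfloor> + 1) f x y / y powr s | x y. 0 < y \<and> y \<le> 1}"

definition Lambda_space :: "real \<Rightarrow> ('a::real_normed_vector \<Rightarrow> real) set" where
  "Lambda_space s = {f. continuous_on UNIV f \<and> bounded (range f)
                        \<and> bdd_above (holder_seminorm_set s f)}"

definition Lambda_norm :: "real \<Rightarrow> ('a::real_normed_vector \<Rightarrow> real) \<Rightarrow> real" where
  "Lambda_norm s f = (SUP x. \<bar>f x\<bar>) + Sup (holder_seminorm_set s f)"

definition tlog :: "real \<Rightarrow> real \<Rightarrow> real" where
  "tlog t a = (if t = 0 then 0 else t * ln (exp 1 + a / t))"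

definition modulus_bound :: "real \<Rightarrow> real \<Rightarrow> real \<Rightarrow> real \<Rightarrow> real" where
  "modulus_bound s dx y y' = (let dy = \<bar>y - y'\<bar> in
     if s < 1 then dx powr s + dy powr s
     else if s = 1 then tlog dx (y + y') + tlog dy (y + y')
     else (y + y') powr (s - 1) * (dy + dx))"

end

theory Submission
  imports Defs
begin

text \<open>
  Let m = floor s + 1 <= r. For s < 1 the function f is s-Hoelder, and the estimate is
  immediate: Delta_h^r f(x) is a fixed combination of values of f at points that move by at
  most |x - x'| + r |h - h'|. For s >= 1 the definition of Lambda_s only controls m-th
  differences, and first differences are recovered by a Marchaud inequality on lines: if
  |w| <= M on an interval of length comparable to X and |Delta_tau^m w| <= R tau^s for
  tau <= X, then |w(t + beta) - w(t)| is at most a constant times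
  (beta / X) M + R beta X^(s-1), with an extra factor log(e + X / beta) when s = 1.
  It is proved by descending from m-th to first differences along dyadic steps, using
  Delta_(2 tau)^j = (I + T_tau)^j Delta_tau^j = 2^j Delta_tau^j + O(Delta_tau^(j+1)); the
  geometric series produced by the last step converges exactly when s > 1, and at s = 1 its
  partial sums give the logarithm. Moving x corresponds to the function
  t -> Delta_h^r f(z + t e) and moving y to t -> Delta_(t e)^r f(z); their m-th differences
  are again O(tau^s) because differences in different variables commute. This bounds the
  change of Delta_h^r f(x) for each fixed direction of h, and taking the supremum over
  |h| = y gives the theorem.
\<close>

section \<open>Finite differences on the line\<close>

fun fwd_diff :: "nat \<Rightarrow> real \<Rightarrow> (real \<Rightarrow> real) \<Rightarrow> real \<Rightarrow> real" where
  "fwd_diff 0 \<tau> w t = w t"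
| "fwd_diff (Suc j) \<tau> w t = fwd_diff j \<tau> w (t + \<tau>) - fwd_diff j \<tau> w t"

lemma fwd_diff_add: "fwd_diff (i + j) \<tau> w t = fwd_diff i \<tau> (fwd_diff j \<tau> w) t"
  by (induction i arbitrary: t) auto

lemma fwd_diff_Suc_right: "fwd_diff (Suc j) \<tau> w = fwd_diff j \<tau> (fwd_diff 1 \<tau> w)"
  using fwd_diff_add[of j 1] by (auto simp: fun_eq_iff)

lemma fwd_diff_plus: "fwd_diff i \<tau> (\<lambda>u. g u + h u) t = fwd_diff i \<tau> g t + fwd_diff i \<tau> h t"
  by (induction i arbitrary: t) auto

lemma fwd_diff_minus: "fwd_diff i \<tau> (\<lambda>u. g u - h u) t = fwd_diff i \<tau> g t - fwd_diff i \<tau> h t"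
  by (induction i arbitrary: t) auto

lemma fwd_diff_shift: "fwd_diff i \<tau> (\<lambda>u. g (u + c)) t = fwd_diff i \<tau> g (t + c)"
  by (induction i arbitrary: t) (auto simp: ac_simps)

lemma fwd_diff_affine: "fwd_diff j \<tau> (\<lambda>u. w (\<alpha> + \<beta> * u)) t = fwd_diff j (\<beta> * \<tau>) w (\<alpha> + \<beta> * t)"
proof (induction j arbitrary: t)
  case (Suc j)
  have "\<alpha> + \<beta> * (t + \<tau>) = \<alpha> + \<beta> * t + \<beta> * \<tau>" by (simp add: algebra_simps)
  then show ?case by (simp add: Suc.IH add.assoc)
qed simp

lemma fwd_diff_commute:
  "fwd_diff j a (\<lambda>t. fwd_diff i b (F t) u) t0 = fwd_diff i b (\<lambda>u. fwd_diff j a (\<lambda>t. F t u) t0) u"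
  by (induction j arbitrary: t0) (simp_all add: fwd_diff_minus)

lemma abs_fwd_diff_le:
  assumes "\<And>l. l \<le> i \<Longrightarrow> \<bar>w (t + real l * \<tau>)\<bar> \<le> D"
  shows "\<bar>fwd_diff i \<tau> w t\<bar> \<le> 2 ^ i * D"
  using assms
proof (induction i arbitrary: t)
  case 0
  then show ?case using "0.prems"[of 0] by simp
next
  case (Suc i)
  have "\<bar>fwd_diff i \<tau> w (t + \<tau>)\<bar> \<le> 2 ^ i * D"
    using Suc.prems[of "Suc l" for l] by (intro Suc.IH) (simp add: algebra_simps)
  moreover have "\<bar>fwd_diff i \<tau> w t\<bar> \<le> 2 ^ i * D"
    using Suc.prems by (intro Suc.IH) auto
  ultimately show ?case by simp
qed

lemma sdiff_pow_eq_fwd_diff: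
  "sdiff_pow k h f x = fwd_diff k 1 (\<lambda>t. f (x + (t - real k / 2) *\<^sub>R h)) 0"
proof (induction k arbitrary: f)
  case (Suc k)
  have c1: "t - real k / 2 + 1/2 = t + 1 - real (Suc k) / 2"
    and c2: "t - real k / 2 - 1/2 = t - real (Suc k) / 2" for t
    by (simp_all add: field_simps)
  have "x + (t - real k / 2) *\<^sub>R h + (1/2) *\<^sub>R h = x + (t + 1 - real (Suc k) / 2) *\<^sub>R h"
    and "x + (t - real k / 2) *\<^sub>R h - (1/2) *\<^sub>R h = x + (t - real (Suc k) / 2) *\<^sub>R h" for t
    by (simp_all only: add.assoc add_diff_eq[symmetric] scaleR_left_distrib[symmetric]
        scaleR_left_diff_distrib[symmetric] c1 c2)
  then have "(\<lambda>t. sdiff h f (x + (t - real k / 2) *\<^sub>R h))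
      = fwd_diff 1 1 (\<lambda>t. f (x + (t - real (Suc k) / 2) *\<^sub>R h))"
    by (simp only: fun_eq_iff sdiff_def One_nat_def fwd_diff.simps) simp
  then show ?case
    using fwd_diff_add[of k 1, symmetric] by (simp add: Suc.IH)
qed simp

lemma fwd_diff_line_eq_sdiff_pow:
  "fwd_diff k \<tau> (\<lambda>t. f (p + t *\<^sub>R v)) t0 = sdiff_pow k (\<tau> *\<^sub>R v) f (p + (t0 + real k * \<tau> / 2) *\<^sub>R v)"
proof -
  have "(\<lambda>u. f (p + (t0 + real k * \<tau> / 2) *\<^sub>R v + (u - real k / 2) *\<^sub>R \<tau> *\<^sub>R v))
      = (\<lambda>u. f (p + (t0 + \<tau> * u) *\<^sub>R v))"
    by (auto simp: fun_eq_iff algebra_simps)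
  then show ?thesis
    using fwd_diff_affine[of k 1 "\<lambda>t. f (p + t *\<^sub>R v)" t0 \<tau> 0]
    by (simp add: sdiff_pow_eq_fwd_diff)
qed

lemma sdiff_pow_add: "sdiff_pow (i + j) h f = sdiff_pow i h (sdiff_pow j h f)"
  by (induction j arbitrary: f) simp_all

lemma abs_sdiff_pow_le:
  assumes "\<And>x. \<bar>f x\<bar> \<le> B"
  shows "\<bar>sdiff_pow k h f x\<bar> \<le> 2 ^ k * B"
  using assms
proof (induction k arbitrary: f B)
  case (Suc k)
  have "\<bar>sdiff h f x\<bar> \<le> 2 * B" for x
    using Suc.prems[of "x + (1/2) *\<^sub>R h"] Suc.prems[of "x - (1/2) *\<^sub>R h"] by (simp add: sdiff_def)
  then show ?case using Suc.IH[of "sdiff h f" "2 * B"] by simp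
qed simp

lemma sdiff_pow_Suc_zero: "sdiff_pow (Suc k) 0 f x = 0"
  using abs_sdiff_pow_le[of "sdiff 0 f" 0 k 0 x] by (simp add: sdiff_def)

definition shift_sum :: "real \<Rightarrow> (real \<Rightarrow> real) \<Rightarrow> real \<Rightarrow> real" where
  "shift_sum \<tau> g u = g (u + \<tau>) + g u"

lemma fwd_diff_shift_sum: "fwd_diff i \<tau> (shift_sum \<tau> g) = shift_sum \<tau> (fwd_diff i \<tau> g)"
  unfolding shift_sum_def[abs_def] by (simp add: fun_eq_iff fwd_diff_plus fwd_diff_shift)

lemma fwd_diff_double: "fwd_diff j (2 * \<tau>) w = (shift_sum \<tau> ^^ j) (fwd_diff j \<tau> w)"
proof (induction j arbitrary: w)
  case (Suc j)
  have "fwd_diff 1 (2 * \<tau>) w = shift_sum \<tau> (fwd_diff 1 \<tau> w)"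
    by (simp add: fun_eq_iff shift_sum_def add.assoc)
  then have "fwd_diff (Suc j) (2 * \<tau>) w = fwd_diff j (2 * \<tau>) (shift_sum \<tau> (fwd_diff 1 \<tau> w))"
    by (simp only: fwd_diff_Suc_right)
  also have "\<dots> = (shift_sum \<tau> ^^ Suc j) (fwd_diff (Suc j) \<tau> w)"
    by (simp only: Suc.IH fwd_diff_shift_sum funpow_Suc_right comp_apply fwd_diff_Suc_right)
  finally show ?case .
qed (simp add: fun_eq_iff)

lemma shift_sum_power_approx:
  assumes "\<And>l. l < j \<Longrightarrow> \<bar>fwd_diff 1 \<tau> g (t + real l * \<tau>)\<bar> \<le> D"
  shows "\<bar>(shift_sum \<tau> ^^ j) g t - 2 ^ j * g t\<bar> \<le> real j * 2 ^ j / 2 * D"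
  using assms
proof (induction j arbitrary: t)
  case (Suc j)
  have "\<bar>(shift_sum \<tau> ^^ j) g (t + \<tau>) - 2 ^ j * g (t + \<tau>)\<bar> \<le> real j * 2 ^ j / 2 * D"
    using Suc.prems[of "Suc l" for l] by (intro Suc.IH) (simp add: algebra_simps)
  moreover have "\<bar>(shift_sum \<tau> ^^ j) g t - 2 ^ j * g t\<bar> \<le> real j * 2 ^ j / 2 * D"
    using Suc.prems by (intro Suc.IH) auto
  moreover have "\<bar>2 ^ j * fwd_diff 1 \<tau> g t\<bar> \<le> 2 ^ j * D"
    using Suc.prems[of 0] by (simp add: abs_mult)
  moreover have "(shift_sum \<tau> ^^ Suc j) g t - 2 ^ Suc j * g t
      = ((shift_sum \<tau> ^^ j) g (t + \<tau>) - 2 ^ j * g (t + \<tau>))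
        + ((shift_sum \<tau> ^^ j) g t - 2 ^ j * g t) + 2 ^ j * fwd_diff 1 \<tau> g t"
    by (simp add: shift_sum_def algebra_simps)
  moreover have "real j * 2 ^ j / 2 * D + real j * 2 ^ j / 2 * D + 2 ^ j * D
      = real (Suc j) * 2 ^ Suc j / 2 * D"
    by (simp add: algebra_simps)
  ultimately show ?case by linarith
qed simp

lemma fwd_diff_double_approx:
  assumes "\<And>l. l < j \<Longrightarrow> \<bar>fwd_diff (Suc j) \<tau> w (t + real l * \<tau>)\<bar> \<le> D"
  shows "\<bar>fwd_diff j (2 * \<tau>) w t - 2 ^ j * fwd_diff j \<tau> w t\<bar> \<le> real j * 2 ^ j / 2 * D"
proof -
  have "fwd_diff 1 \<tau> (fwd_diff j \<tau> w) = fwd_diff (Suc j) \<tau> w"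
    by (simp add: fun_eq_iff)
  then show ?thesis
    unfolding fwd_diff_double using shift_sum_power_approx[of j \<tau> "fwd_diff j \<tau> w" t D] assms
    by simp
qed

section \<open>A Marchaud inequality\<close>

lemma linear_recurrence_le:
  fixes u \<beta> :: "nat \<Rightarrow> real"
  assumes "0 \<le> c" and step: "\<And>n. u (Suc n) \<le> c * u n + \<beta> (Suc n)"
  shows "u n \<le> c ^ n * u 0 + (\<Sum>k=1..n. c ^ (n - k) * \<beta> k)"
proof (induction n)
  case (Suc n)
  have "c * (\<Sum>k=1..n. c ^ (n - k) * \<beta> k) = (\<Sum>k=1..n. c ^ (Suc n - k) * \<beta> k)"
    by (auto simp: sum_distrib_left Suc_diff_le intro!: sum.cong)
  then have "c * (c ^ n * u 0 + (\<Sum>k=1..n. c ^ (n - k) * \<beta> k)) + \<beta> (Suc n)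
      = c ^ Suc n * u 0 + (\<Sum>k=1..Suc n. c ^ (Suc n - k) * \<beta> k)"
    by (simp add: algebra_simps)
  moreover have "c * u n \<le> c * (c ^ n * u 0 + (\<Sum>k=1..n. c ^ (n - k) * \<beta> k))"
    using Suc.IH \<open>0 \<le> c\<close> by (rule mult_left_mono)
  ultimately show ?case using step[of n] by linarith
qed simp

lemma sum_power_mult_power:
  fixes c p :: real
  assumes "0 < c"
  shows "(\<Sum>k=1..n. c ^ (n - k) * p ^ k) = c ^ n * (\<Sum>k=1..n. (p / c) ^ k)"
  unfolding sum_distrib_left
proof (rule sum.cong)
  fix k assume "k \<in> {1..n}"
  then have "c ^ n = c ^ (n - k) * c ^ k" by (simp flip: power_add)
  then show "c ^ (n - k) * p ^ k = c ^ n * (p / c) ^ k"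
    using assms by (simp add: power_divide)
qed simp

lemma sum_power_le_of_lt_1:
  fixes q :: real
  assumes "0 \<le> q" "q < 1"
  shows "(\<Sum>k=1..n. q ^ k) \<le> q / (1 - q)"
proof (cases "n = 0")
  case False
  then have "(1 - q) * (\<Sum>k=1..n. q ^ k) = q - q ^ Suc n"
    using sum_gp_multiplied[of 1 n q] by simp
  then have "(\<Sum>k=1..n. q ^ k) * (1 - q) \<le> q"
    using zero_le_power[OF assms(1), of "Suc n"] by (simp add: mult.commute)
  then show ?thesis using assms by (simp add: pos_le_divide_eq)
qed (use assms in simp)

lemma sum_power_le_of_gt_1:
  fixes x :: real
  assumes "1 < x"
  shows "(\<Sum>k=1..n. x ^ k) \<le> x / (x - 1) * x ^ n"
proof (cases "n = 0")
  case False
  then have "(1 - x) * (\<Sum>k=1..n. x ^ k) = x - x ^ Suc n"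
    using sum_gp_multiplied[of 1 n x] by simp
  then show ?thesis using assms by (simp add: field_simps)
qed (use assms in simp)

lemma sum_power_mult_power_le:
  fixes c \<rho> :: real
  assumes "0 < c" "c < \<rho>"
  shows "(\<Sum>k=1..n. c ^ (n - k) * \<rho> ^ k) \<le> \<rho> / (\<rho> - c) * \<rho> ^ n"
proof -
  have "1 < \<rho> / c" using assms by simp
  then have "c ^ n * (\<Sum>k=1..n. (\<rho> / c) ^ k) \<le> c ^ n * ((\<rho> / c) / (\<rho> / c - 1) * (\<rho> / c) ^ n)"
    using assms by (intro mult_left_mono sum_power_le_of_gt_1) auto
  also have "\<dots> = \<rho> / (\<rho> - c) * \<rho> ^ n"
    using assms by (simp add: power_divide field_simps)
  finally show ?thesis using sum_power_mult_power[OF assms(1)] by simp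
qed

text \<open>The window of length (m^2 + m) H contains every point sampled by the dyadic descent
  from m-th to first differences started at t0.\<close>

definition marchaud_hyps :: "nat \<Rightarrow> real \<Rightarrow> (real \<Rightarrow> real) \<Rightarrow> real \<Rightarrow> real \<Rightarrow> real \<Rightarrow> real \<Rightarrow> bool" where
  "marchaud_hyps m s w H M R t0 \<longleftrightarrow> 0 < H \<and> 0 \<le> M \<and> 0 \<le> R \<and>
     (\<forall>t \<in> {t0..t0 + real (m * m + m) * H}. \<bar>w t\<bar> \<le> M) \<and>
     (\<forall>t \<tau>. 0 < \<tau> \<and> \<tau> \<le> H \<longrightarrow> \<bar>fwd_diff m \<tau> w t\<bar> \<le> R * \<tau> powr s)"

text \<open>A bound for the j-th differences at all dyadic steps H / 2^n, valid uniformly for all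
  data satisfying the hypotheses, so that the constants a and b depend on m, s and rho only.\<close>

definition dyadic_level_bound :: "nat \<Rightarrow> real \<Rightarrow> real \<Rightarrow> nat \<Rightarrow> real \<Rightarrow> real \<Rightarrow> bool" where
  "dyadic_level_bound m s \<rho> j a b \<longleftrightarrow>
     (\<forall>w H M R t0 n t. marchaud_hyps m s w H M R t0 \<longrightarrow> t \<in> {t0..t0 + real (j * j) * H} \<longrightarrow>
        \<bar>fwd_diff j (H / 2 ^ n) w t\<bar> \<le> a * ((1/2) ^ j) ^ n * M + b * R * H powr s * \<rho> ^ n)"

lemma marchaud_hyps_mono:
  assumes "marchaud_hyps m s w X M R t0" "0 < H" "H \<le> X"
  shows "marchaud_hyps m s w H M R t0"
proof -
  have "real (m * m + m) * H \<le> real (m * m + m) * X"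
    using assms(3) by (intro mult_left_mono) auto
  then show ?thesis using assms unfolding marchaud_hyps_def by auto
qed

lemma abs_fwd_diff_window_le:
  assumes "j \<le> m" and hyps: "marchaud_hyps m s w H M R t0" and t: "t \<in> {t0..t0 + real (j * j) * H}"
  shows "\<bar>fwd_diff j H w t\<bar> \<le> 2 ^ j * M"
proof (rule abs_fwd_diff_le)
  fix l assume "l \<le> j"
  have H: "0 < H" and bounded: "\<And>t. t \<in> {t0..t0 + real (m * m + m) * H} \<Longrightarrow> \<bar>w t\<bar> \<le> M"
    using hyps by (auto simp: marchaud_hyps_def)
  have "0 \<le> real l * H" "real l * H \<le> real j * H" using H \<open>l \<le> j\<close> by simp_all
  have "j * j + j \<le> m * m + m" using \<open>j \<le> m\<close> by (intro add_mono mult_le_mono)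
  then have "real (j * j) + real j \<le> real (m * m + m)" by (metis of_nat_add of_nat_le_iff)
  then have "(real (j * j) + real j) * H \<le> real (m * m + m) * H"
    by (rule mult_right_mono) (use H in simp)
  then have "t + real l * H \<in> {t0..t0 + real (m * m + m) * H}"
    using t \<open>0 \<le> real l * H\<close> \<open>real l * H \<le> real j * H\<close>
    unfolding atLeastAtMost_iff distrib_right by linarith
  then show "\<bar>w (t + real l * H)\<bar> \<le> M" by (rule bounded)
qed

lemma dyadic_diff_recurrence:
  assumes level: "dyadic_level_bound m s \<rho> (Suc j) a' b'"
    and hyps: "marchaud_hyps m s w H M R t0" and t: "t \<in> {t0..t0 + real (j * j) * H}"
  shows "\<bar>fwd_diff j (H / 2 ^ Suc n) w t\<bar>
    \<le> (1/2) ^ j * \<bar>fwd_diff j (H / 2 ^ n) w t\<bar>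
      + real j / 2 * (a' * ((1/2) ^ Suc j) ^ Suc n * M + b' * R * H powr s * \<rho> ^ Suc n)"
proof -
  define \<tau> where "\<tau> = H / 2 ^ Suc n"
  define D where "D = a' * ((1/2) ^ Suc j) ^ Suc n * M + b' * R * H powr s * \<rho> ^ Suc n"
  have H: "0 < H" using hyps by (simp add: marchaud_hyps_def)
  have "(1::real) \<le> 2 ^ Suc n" by (rule one_le_power) simp
  then have \<tau>: "0 < \<tau>" "\<tau> \<le> H" "2 * \<tau> = H / 2 ^ n"
    using H by (simp_all add: \<tau>_def divide_le_eq)
  have "\<bar>fwd_diff (Suc j) \<tau> w (t + real l * \<tau>)\<bar> \<le> D" if "l < j" for l
  proof -
    have "0 \<le> real l * \<tau>" "real l * \<tau> \<le> real j * H"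
      using that \<tau> by (auto intro: mult_mono)
    moreover have "real (j * j) * H + real j * H \<le> real (Suc j * Suc j) * H"
      using H by (simp add: algebra_simps)
    ultimately have "t + real l * \<tau> \<in> {t0..t0 + real (Suc j * Suc j) * H}"
      using t unfolding atLeastAtMost_iff by linarith
    then show ?thesis
      using level hyps unfolding dyadic_level_bound_def D_def \<tau>_def by blast
  qed
  then have "\<bar>fwd_diff j (2 * \<tau>) w t - 2 ^ j * fwd_diff j \<tau> w t\<bar> \<le> real j * 2 ^ j / 2 * D"
    by (rule fwd_diff_double_approx)
  moreover have "\<bar>2 ^ j * fwd_diff j \<tau> w t\<bar>
      \<le> \<bar>fwd_diff j (2 * \<tau>) w t\<bar> + \<bar>fwd_diff j (2 * \<tau>) w t - 2 ^ j * fwd_diff j \<tau> w t\<bar>"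
    by arith
  moreover have "\<bar>2 ^ j * fwd_diff j \<tau> w t\<bar> = 2 ^ j * \<bar>fwd_diff j \<tau> w t\<bar>"
    and "real j * 2 ^ j / 2 * D = 2 ^ j * (real j / 2 * D)"
    by (simp_all add: abs_mult)
  ultimately have "2 ^ j * \<bar>fwd_diff j \<tau> w t\<bar> \<le> \<bar>fwd_diff j (2 * \<tau>) w t\<bar> + 2 ^ j * (real j / 2 * D)"
    by linarith
  then have "(1/2) ^ j * (2 ^ j * \<bar>fwd_diff j \<tau> w t\<bar>)
      \<le> (1/2) ^ j * (\<bar>fwd_diff j (2 * \<tau>) w t\<bar> + 2 ^ j * (real j / 2 * D))"
    by (rule mult_left_mono) simp
  then show ?thesis
    unfolding \<tau>(3)[symmetric] by (simp add: \<tau>_def D_def power_one_over algebra_simps)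
qed

lemma dyadic_diff_bound_step:
  assumes "j < m" and level: "dyadic_level_bound m s \<rho> (Suc j) a' b'" and "0 \<le> a'"
    and hyps: "marchaud_hyps m s w H M R t0" and t: "t \<in> {t0..t0 + real (j * j) * H}"
  shows "\<bar>fwd_diff j (H / 2 ^ n) w t\<bar>
    \<le> (2 ^ j + real j / 2 * a') * ((1/2) ^ j) ^ n * M
      + real j / 2 * b' * R * H powr s * (\<Sum>k=1..n. ((1/2) ^ j) ^ (n - k) * \<rho> ^ k)"
proof -
  define c :: real where "c = (1/2) ^ j"
  define u where "u n = \<bar>fwd_diff j (H / 2 ^ n) w t\<bar>" for n
  define \<beta> where "\<beta> k = real j / 2 * (a' * M * (c / 2) ^ k + b' * R * H powr s * \<rho> ^ k)" for k
  have c: "0 < c" by (simp add: c_def)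
  have M: "0 \<le> M" using hyps by (simp add: marchaud_hyps_def)
  have u0: "u 0 \<le> 2 ^ j * M"
    using abs_fwd_diff_window_le[OF less_imp_le[OF \<open>j < m\<close>] hyps t] by (simp add: u_def)
  have "u (Suc n) \<le> c * u n + \<beta> (Suc n)" for n
    using dyadic_diff_recurrence[OF level hyps t, of n]
    by (simp add: u_def \<beta>_def c_def ac_simps)
  then have "u n \<le> c ^ n * u 0 + (\<Sum>k=1..n. c ^ (n - k) * \<beta> k)"
    using c by (intro linear_recurrence_le) auto
  moreover have "c ^ n * u 0 \<le> c ^ n * (2 ^ j * M)"
    using u0 c by (intro mult_left_mono) auto
  ultimately have "u n \<le> c ^ n * (2 ^ j * M) + (\<Sum>k=1..n. c ^ (n - k) * \<beta> k)"
    by linarith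
  also have "(\<Sum>k=1..n. c ^ (n - k) * \<beta> k)
      = real j / 2 * a' * M * (\<Sum>k=1..n. c ^ (n - k) * (c / 2) ^ k)
        + real j / 2 * b' * R * H powr s * (\<Sum>k=1..n. c ^ (n - k) * \<rho> ^ k)"
    unfolding \<beta>_def sum_distrib_left sum.distrib[symmetric]
    by (intro sum.cong) (simp_all add: algebra_simps)
  also have "(\<Sum>k=1..n. c ^ (n - k) * (c / 2) ^ k) \<le> c ^ n"
    using sum_power_mult_power[OF c, of n "c / 2"] sum_power_le_of_lt_1[of "1/2" n] c
    by (simp add: mult_left_le)
  finally have "u n \<le> c ^ n * (2 ^ j * M) + real j / 2 * a' * M * c ^ n
      + real j / 2 * b' * R * H powr s * (\<Sum>k=1..n. c ^ (n - k) * \<rho> ^ k)"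
    using \<open>0 \<le> a'\<close> M by (simp add: mult_left_mono)
  then show ?thesis by (simp add: u_def c_def algebra_simps)
qed

lemma powr_divide_two_power:
  fixes H s :: real
  assumes "0 \<le> H"
  shows "(H / 2 ^ n) powr s = H powr s * (2 powr (- s)) ^ n"
proof -
  have "(2::real) ^ n = 2 powr real n" by (simp add: powr_realpow)
  then have "(H / 2 ^ n) powr s = H powr s * 2 powr (- (real n * s))"
    using assms by (simp add: powr_divide powr_powr powr_minus_divide)
  also have "2 powr (- (real n * s)) = (2 powr (- s)) ^ n"
    by (simp add: powr_power)
  finally show ?thesis .
qed

lemma dyadic_level_bound_top:
  assumes "2 powr (- s) \<le> \<rho>"
  shows "dyadic_level_bound m s \<rho> m 0 1"
  unfolding dyadic_level_bound_def
proof (intro allI impI)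
  fix w H M R t0 n t
  assume hyps: "marchaud_hyps m s w H M R t0"
  then have H: "0 < H" and R: "0 \<le> R"
    and diff: "\<And>t \<tau>. 0 < \<tau> \<Longrightarrow> \<tau> \<le> H \<Longrightarrow> \<bar>fwd_diff m \<tau> w t\<bar> \<le> R * \<tau> powr s"
    unfolding marchaud_hyps_def by auto
  have "(1::real) \<le> 2 ^ n" by (rule one_le_power) simp
  then have "\<bar>fwd_diff m (H / 2 ^ n) w t\<bar> \<le> R * (H / 2 ^ n) powr s"
    using H by (intro diff) (simp_all add: divide_le_eq)
  also have "\<dots> = R * (H powr s * (2 powr (- s)) ^ n)"
    using H by (simp add: powr_divide_two_power)
  also have "\<dots> \<le> R * (H powr s * \<rho> ^ n)"
    using assms R by (intro mult_left_mono power_mono) auto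
  finally show "\<bar>fwd_diff m (H / 2 ^ n) w t\<bar> \<le> 0 * ((1/2) ^ m) ^ n * M + 1 * R * H powr s * \<rho> ^ n"
    by (simp add: ac_simps)
qed

lemma dyadic_level_bound_down:
  assumes "2 \<le> j" "j < m" "1/4 < \<rho>"
    and level: "dyadic_level_bound m s \<rho> (Suc j) a' b'" and "0 \<le> a'" "0 \<le> b'"
  shows "dyadic_level_bound m s \<rho> j (2 ^ j + real j / 2 * a') (real j / 2 * b' * (\<rho> / (\<rho> - 1/4)))"
  unfolding dyadic_level_bound_def
proof (intro allI impI)
  fix w H M R t0 n t
  assume hyps: "marchaud_hyps m s w H M R t0" and t: "t \<in> {t0..t0 + real (j * j) * H}"
  have R: "0 \<le> R" using hyps by (simp add: marchaud_hyps_def)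
  define c :: real where "c = (1/2) ^ j"
  have "c \<le> (1/2) ^ 2" unfolding c_def using \<open>2 \<le> j\<close> by (intro power_decreasing) auto
  then have c: "0 < c" "c \<le> 1/4" by (simp_all add: c_def power2_eq_square)
  have "(\<Sum>k=1..n. c ^ (n - k) * \<rho> ^ k) \<le> \<rho> / (\<rho> - c) * \<rho> ^ n"
    using c \<open>1/4 < \<rho>\<close> by (intro sum_power_mult_power_le) auto
  also have "\<dots> \<le> \<rho> / (\<rho> - 1/4) * \<rho> ^ n"
    using c \<open>1/4 < \<rho>\<close> by (intro mult_right_mono divide_left_mono) auto
  finally have "real j / 2 * b' * R * H powr s * (\<Sum>k=1..n. ((1/2) ^ j) ^ (n - k) * \<rho> ^ k)
      \<le> real j / 2 * b' * R * H powr s * (\<rho> / (\<rho> - 1/4) * \<rho> ^ n)"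
    using \<open>0 \<le> b'\<close> R unfolding c_def by (intro mult_left_mono) auto
  then have "real j / 2 * b' * R * H powr s * (\<Sum>k=1..n. ((1/2) ^ j) ^ (n - k) * \<rho> ^ k)
      \<le> real j / 2 * b' * (\<rho> / (\<rho> - 1/4)) * R * H powr s * \<rho> ^ n"
    by (simp only: ac_simps)
  then show "\<bar>fwd_diff j (H / 2 ^ n) w t\<bar> \<le> (2 ^ j + real j / 2 * a') * ((1/2) ^ j) ^ n * M
      + real j / 2 * b' * (\<rho> / (\<rho> - 1/4)) * R * H powr s * \<rho> ^ n"
    using dyadic_diff_bound_step[OF \<open>j < m\<close> level \<open>0 \<le> a'\<close> hyps t, of n] by linarith
qed

lemma dyadic_level_bound_exists:
  assumes "2 powr (- s) \<le> \<rho>" "1/4 < \<rho>" "2 \<le> j" "j \<le> m"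
  shows "\<exists>a b. 0 \<le> a \<and> 0 \<le> b \<and> dyadic_level_bound m s \<rho> j a b"
  using \<open>j \<le> m\<close> \<open>2 \<le> j\<close>
proof (induction j rule: inc_induct)
  case base
  show ?case
    using dyadic_level_bound_top[OF assms(1)] by (intro exI[of _ 0] exI[of _ 1]) simp
next
  case (step j)
  then obtain a' b' where "0 \<le> a'" "0 \<le> b'" and level: "dyadic_level_bound m s \<rho> (Suc j) a' b'"
    by auto
  moreover have "0 \<le> real j / 2 * b' * (\<rho> / (\<rho> - 1/4))"
    using \<open>0 \<le> b'\<close> \<open>1/4 < \<rho>\<close> by simp
  moreover have "0 \<le> 2 ^ j + real j / 2 * a'"
    using \<open>0 \<le> a'\<close> by simp
  ultimately show ?case
    using dyadic_level_bound_down[OF step.prems step.hyps(2) \<open>1/4 < \<rho>\<close> level] by blast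
qed

lemma marchaud_dyadic:
  assumes "2 \<le> m" "2 powr (- s) \<le> \<rho>" "1/4 < \<rho>"
  shows "\<exists>C\<ge>0. \<forall>w H M R t0 n. marchaud_hyps m s w H M R t0 \<longrightarrow>
    \<bar>w (t0 + H / 2 ^ n) - w t0\<bar> \<le> C * (1/2) ^ n * (M + R * H powr s * (\<Sum>k=1..n. (2 * \<rho>) ^ k))"
proof -
  obtain a b where ab: "0 \<le> a" "0 \<le> b" and level: "dyadic_level_bound m s \<rho> 2 a b"
    using dyadic_level_bound_exists[OF assms(2,3) order_refl assms(1)] by blast
  define C where "C = 2 + a / 2 + b / 2"
  have "\<bar>w (t0 + H / 2 ^ n) - w t0\<bar> \<le> C * (1/2) ^ n * (M + R * H powr s * (\<Sum>k=1..n. (2 * \<rho>) ^ k))"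
    if hyps: "marchaud_hyps m s w H M R t0" for w H M R t0 n
  proof -
    have H: "0 < H" and M: "0 \<le> M" and R: "0 \<le> R"
      using hyps by (auto simp: marchaud_hyps_def)
    have "(\<Sum>k=1..n. ((1/2) ^ 1) ^ (n - k) * \<rho> ^ k) = (1/2) ^ n * (\<Sum>k=1..n. (2 * \<rho>) ^ k)"
      using sum_power_mult_power[of "1/2" n \<rho>] by (simp add: mult.commute)
    then have "\<bar>w (t0 + H / 2 ^ n) - w t0\<bar>
        \<le> (2 + a / 2) * (1/2) ^ n * M + b / 2 * R * H powr s * ((1/2) ^ n * (\<Sum>k=1..n. (2 * \<rho>) ^ k))"
      using dyadic_diff_bound_step[of 1 m s \<rho> a b, OF _ _ _ hyps, of t0 n] assms(1) level ab H
      by (simp add: add.commute numeral_2_eq_2)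
    also have "\<dots> \<le> C * (1/2) ^ n * M + C * R * H powr s * ((1/2) ^ n * (\<Sum>k=1..n. (2 * \<rho>) ^ k))"
      using ab M R assms(3)
      by (intro add_mono mult_right_mono mult_nonneg_nonneg sum_nonneg) (auto simp: C_def)
    finally show ?thesis by (simp add: algebra_simps)
  qed
  moreover have "0 \<le> C" using ab by (simp add: C_def)
  ultimately show ?thesis by blast
qed

text \<open>The size, at scale Y, of a first difference with step d of a function whose m-th
  differences are O(tau^s) (Marchaud's inequality below).\<close>

definition modulus_term :: "real \<Rightarrow> real \<Rightarrow> real \<Rightarrow> real" where
  "modulus_term s d Y = (if s = 1 then tlog d Y else d * Y powr (s - 1))"

lemma one_le_ln_exp_1_add: "0 \<le> x \<Longrightarrow> 1 \<le> ln (exp 1 + x :: real)"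
  using ln_le_cancel_iff[of "exp 1" "exp 1 + x"] by (simp add: add_pos_nonneg)

lemma tlog_ge: "0 \<le> t \<Longrightarrow> 0 \<le> a \<Longrightarrow> t \<le> tlog t a"
  using one_le_ln_exp_1_add[of "a / t"] by (simp add: tlog_def mult_le_cancel_left1)

lemma tlog_mono: "0 \<le> t \<Longrightarrow> 0 \<le> a \<Longrightarrow> a \<le> b \<Longrightarrow> tlog t a \<le> tlog t b"
  by (auto simp: tlog_def add_pos_nonneg intro!: mult_left_mono divide_right_mono)

lemma modulus_term_ge: "0 \<le> d \<Longrightarrow> 0 \<le> Y \<Longrightarrow> d * Y powr (s - 1) \<le> modulus_term s d Y"
  using tlog_ge[of d Y] by (auto simp: modulus_term_def mult_left_le)

lemma modulus_term_nonneg: "0 \<le> d \<Longrightarrow> 0 \<le> Y \<Longrightarrow> 0 \<le> modulus_term s d Y"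
  using tlog_ge[of d Y] by (auto simp: modulus_term_def)

lemma modulus_term_mono:
  "1 \<le> s \<Longrightarrow> 0 \<le> d \<Longrightarrow> 0 \<le> Y \<Longrightarrow> Y \<le> Y' \<Longrightarrow> modulus_term s d Y \<le> modulus_term s d Y'"
  by (auto simp: modulus_term_def intro!: tlog_mono mult_left_mono powr_mono2)

lemma modulus_bound_eq_modulus_term:
  "1 \<le> s \<Longrightarrow> modulus_bound s dx y y' = modulus_term s dx (y + y') + modulus_term s \<bar>y - y'\<bar> (y + y')"
  by (auto simp: modulus_bound_def modulus_term_def Let_def algebra_simps)

lemma exists_dyadic_scale:
  fixes \<beta> X :: real
  assumes "0 < \<beta>" "\<beta> \<le> X"
  obtains k where "2 ^ k * \<beta> \<le> X" "X < 2 ^ Suc k * \<beta>"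
proof -
  define N where "N = nat \<lfloor>X / \<beta>\<rfloor>"
  have "1 \<le> X / \<beta>" using assms by simp
  then have "1 \<le> N" by (simp add: N_def le_nat_floor)
  then obtain k where k: "2 ^ k \<le> N" "N < 2 ^ (k + 1)"
    using ex_power_ivl1[of 2 N] by auto
  have "real N \<le> X / \<beta>" "X / \<beta> < real N + 1"
    using \<open>1 \<le> X / \<beta>\<close> by (simp_all add: N_def)
  moreover have "(2::real) ^ k \<le> real N"
    using k(1) by simp
  moreover have "real N + 1 \<le> 2 ^ Suc k"
    using of_nat_mono[of "N + 1" "2 ^ (k + 1)", where 'a = real] k(2) by simp
  ultimately have "2 ^ k \<le> X / \<beta>" "X / \<beta> < 2 ^ Suc k" by linarith+
  then show ?thesis using assms that by (simp add: field_simps)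
qed

text \<open>The decay rate rho of the m-th differences along dyadic steps: it dominates 2^(-s), and
  it exceeds 1/4, which beats the contraction factor 2^(-j) of the levels j >= 2. At the last
  level the ratio becomes 2 rho, which is < 1 for s > 1 and = 1 for s = 1.\<close>

definition marchaud_ratio :: "real \<Rightarrow> real" where
  "marchaud_ratio s = 2 powr (- min s (3/2))"

lemma marchaud_ratio_bounds: "2 powr (- s) \<le> marchaud_ratio s" "1/4 < marchaud_ratio s"
proof -
  show "2 powr (- s) \<le> marchaud_ratio s"
    unfolding marchaud_ratio_def by (intro powr_mono) auto
  show "1/4 < marchaud_ratio s"
    using powr_less_mono[of "-2" "- min s (3/2)" 2] by (simp add: marchaud_ratio_def powr_minus_divide)
qed

lemma dyadic_exponent_le_ln:
  assumes "0 < \<beta>" "2 ^ k * \<beta> \<le> X"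
  shows "real k \<le> 2 * ln (exp 1 + X / \<beta>)"
proof -
  have "real k * (2/3) \<le> real k * ln 2"
    using ln2_ge_two_thirds by (intro mult_left_mono) auto
  also have "\<dots> = ln (2 ^ k)" by (simp add: ln_realpow)
  also have "\<dots> \<le> ln (exp 1 + X / \<beta>)"
  proof -
    have "(2::real) ^ k \<le> X / \<beta>" using assms by (simp add: field_simps)
    moreover have "(0::real) < 2 ^ k" by simp
    ultimately show ?thesis using exp_gt_zero[of 1] by (subst ln_le_cancel_iff) linarith+
  qed
  finally show ?thesis using one_le_ln_exp_1_add[of "X / \<beta>"] by simp
qed

lemma dyadic_sum_le_modulus_term:
  assumes "1 \<le> s"
  shows "\<exists>B\<ge>0. \<forall>k \<beta> X. 0 < \<beta> \<longrightarrow> 2 ^ k * \<beta> \<le> X \<longrightarrow>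
    \<beta> * (2 ^ k * \<beta>) powr (s - 1) * (\<Sum>i=1..k. (2 * marchaud_ratio s) ^ i) \<le> B * modulus_term s \<beta> X"
proof (cases "s = 1")
  case True
  have "\<beta> * real k \<le> 2 * tlog \<beta> X" if "0 < \<beta>" "2 ^ k * \<beta> \<le> X" for k \<beta> X
    using dyadic_exponent_le_ln[OF that] that by (simp add: tlog_def mult_left_mono)
  then show ?thesis
    using True by (intro exI[of _ 2]) (simp add: modulus_term_def marchaud_ratio_def powr_minus_divide)
next
  case False
  define q :: real where "q = 2 * marchaud_ratio s"
  have "(2::real) powr (- min s (3/2)) < 2 powr (- 1)"
    using False assms by (intro powr_less_mono) auto
  then have q: "0 \<le> q" "q < 1" by (simp_all add: q_def marchaud_ratio_def powr_minus_divide)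
  have "\<beta> * (2 ^ k * \<beta>) powr (s - 1) * (\<Sum>i=1..k. q ^ i) \<le> q / (1 - q) * modulus_term s \<beta> X"
    if "0 < \<beta>" "2 ^ k * \<beta> \<le> X" for k \<beta> X
  proof -
    have "(2 ^ k * \<beta>) powr (s - 1) \<le> X powr (s - 1)"
      using that assms by (intro powr_mono2) auto
    then have "\<beta> * (2 ^ k * \<beta>) powr (s - 1) * (\<Sum>i=1..k. q ^ i) \<le> \<beta> * X powr (s - 1) * (q / (1 - q))"
      using that q sum_power_le_of_lt_1[OF q, of k]
      by (intro mult_mono mult_left_mono sum_nonneg) auto
    then show ?thesis using False by (simp add: modulus_term_def ac_simps)
  qed
  moreover have "0 \<le> q / (1 - q)" using q by simp
  ultimately show ?thesis unfolding q_def by blast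
qed

definition marchaud_constant :: "nat \<Rightarrow> real \<Rightarrow> real \<Rightarrow> bool" where
  "marchaud_constant m s C \<longleftrightarrow> 0 \<le> C \<and>
     (\<forall>w X \<beta> M R t0. marchaud_hyps m s w X M R t0 \<longrightarrow> 0 < \<beta> \<longrightarrow> \<beta> \<le> X \<longrightarrow>
        \<bar>w (t0 + \<beta>) - w t0\<bar> \<le> C * (\<beta> / X * M + R * modulus_term s \<beta> X))"

lemma marchaud_constant_nonneg: "marchaud_constant m s C \<Longrightarrow> 0 \<le> C"
  by (simp add: marchaud_constant_def)

lemma marchaud_constantD:
  assumes "marchaud_constant m s C" "marchaud_hyps m s w X M R t0" "0 < \<beta>" "\<beta> \<le> X"
  shows "\<bar>w (t0 + \<beta>) - w t0\<bar> \<le> C * (\<beta> / X * M + R * modulus_term s \<beta> X)"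
  using assms unfolding marchaud_constant_def by blast

lemma marchaud_inequality:
  assumes "2 \<le> m" "1 \<le> s"
  shows "\<exists>C. marchaud_constant m s C"
proof -
  obtain C0 where "0 \<le> C0" and dyadic: "\<And>w H M R t0 n. marchaud_hyps m s w H M R t0 \<Longrightarrow>
      \<bar>w (t0 + H / 2 ^ n) - w t0\<bar>
        \<le> C0 * (1/2) ^ n * (M + R * H powr s * (\<Sum>k=1..n. (2 * marchaud_ratio s) ^ k))"
    using marchaud_dyadic[OF assms(1) marchaud_ratio_bounds] by blast
  obtain B where "0 \<le> B" and sum_le: "\<And>k \<beta> X. 0 < \<beta> \<Longrightarrow> 2 ^ k * \<beta> \<le> X \<Longrightarrow>
      \<beta> * (2 ^ k * \<beta>) powr (s - 1) * (\<Sum>i=1..k. (2 * marchaud_ratio s) ^ i) \<le> B * modulus_term s \<beta> X"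
    using dyadic_sum_le_modulus_term[OF assms(2)] by blast
  have "\<bar>w (t0 + \<beta>) - w t0\<bar> \<le> C0 * (2 + B) * (\<beta> / X * M + R * modulus_term s \<beta> X)"
    if hyps: "marchaud_hyps m s w X M R t0" and \<beta>: "0 < \<beta>" "\<beta> \<le> X" for w X \<beta> M R t0
  proof -
    obtain k where k: "2 ^ k * \<beta> \<le> X" "X < 2 ^ Suc k * \<beta>"
      using exists_dyadic_scale[OF \<beta>] .
    define H where "H = 2 ^ k * \<beta>"
    define S where "S = (\<Sum>i=1..k. (2 * marchaud_ratio s) ^ i)"
    have H: "0 < H" "H \<le> X" "\<beta> / H \<le> 2 * (\<beta> / X)" "H / 2 ^ k = \<beta>" "(1/2) ^ k = \<beta> / H"
      using k \<beta> by (simp_all add: H_def power_one_over field_simps)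
    have M: "0 \<le> M" and R: "0 \<le> R" using hyps by (simp_all add: marchaud_hyps_def)
    have "H powr s = H * H powr (s - 1)" using H(1) by (simp add: powr_mult_base)
    then have "\<bar>w (t0 + \<beta>) - w t0\<bar> \<le> C0 * (\<beta> / H) * (M + R * (H * H powr (s - 1)) * S)"
      using dyadic[OF marchaud_hyps_mono[OF hyps H(1,2)], of k] by (simp add: H S_def)
    also have "\<dots> = C0 * (\<beta> / H * M + R * (\<beta> * H powr (s - 1) * S))"
      using H(1) by (simp add: field_simps)
    also have "\<dots> \<le> C0 * (2 * (\<beta> / X) * M + R * (B * modulus_term s \<beta> X))"
      using sum_le[OF \<beta>(1) k(1)] H(3) M R \<open>0 \<le> C0\<close>
      by (intro mult_left_mono add_mono mult_right_mono) (simp_all add: H_def S_def)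
    also have "\<dots> \<le> C0 * (2 + B) * (\<beta> / X * M + R * modulus_term s \<beta> X)"
      using \<open>0 \<le> C0\<close> \<open>0 \<le> B\<close> \<beta> M R modulus_term_nonneg[of \<beta> X s]
      by (auto simp: algebra_simps intro!: mult_left_mono add_increasing)
    finally show ?thesis .
  qed
  then show ?thesis
    using \<open>0 \<le> C0\<close> \<open>0 \<le> B\<close> unfolding marchaud_constant_def by (intro exI[of _ "C0 * (2 + B)"]) auto
qed

section \<open>Differences of functions in Lambda_s\<close>

abbreviation Lambda_order :: "real \<Rightarrow> nat" where
  "Lambda_order s \<equiv> nat \<lfloor>s\<rfloor> + 1"

definition Lambda_bound :: "real \<Rightarrow> real \<Rightarrow> ('a::real_normed_vector \<Rightarrow> real) \<Rightarrow> bool" where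
  "Lambda_bound s K f \<longleftrightarrow>
     (\<forall>x. \<bar>f x\<bar> \<le> K) \<and> (\<forall>x h. \<bar>sdiff_pow (Lambda_order s) h f x\<bar> \<le> K * norm h powr s)"

lemma Lambda_bound_nonneg: "Lambda_bound s K f \<Longrightarrow> 0 \<le> K"
  unfolding Lambda_bound_def by (meson abs_ge_zero order_trans)

lemma Lambda_bound_line:
  assumes "Lambda_bound s K f"
  shows "\<bar>fwd_diff (Lambda_order s) \<tau> (\<lambda>t. f (p + t *\<^sub>R v)) t0\<bar> \<le> K * (\<bar>\<tau>\<bar> * norm v) powr s"
  using assms unfolding Lambda_bound_def fwd_diff_line_eq_sdiff_pow by (metis norm_scaleR)

lemma abs_sdiff_pow_Lambda_bound:
  assumes "Lambda_bound s K f" "Lambda_order s \<le> r"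
  shows "\<bar>sdiff_pow r h f x\<bar> \<le> 2 ^ (r - (Lambda_order s)) * (K * norm h powr s)"
proof -
  define m where "m = Lambda_order s"
  have "sdiff_pow r h f = sdiff_pow (r - m) h (sdiff_pow m h f)"
    using assms(2) sdiff_pow_add[of "r - m" m h f] by (simp add: m_def)
  then show ?thesis
    using assms(1) by (simp add: m_def Lambda_bound_def abs_sdiff_pow_le)
qed

lemma fwd_diff_sdiff_family_bound:
  assumes "Lambda_bound s K f" "0 \<le> s" "0 \<le> \<tau>" and v: "\<And>l. l \<le> r \<Longrightarrow> norm (v (real l)) \<le> V"
  shows "\<bar>fwd_diff (Lambda_order s) \<tau> (\<lambda>t. fwd_diff r 1 (\<lambda>\<sigma>. f (a \<sigma> + t *\<^sub>R v \<sigma>)) 0) t0\<bar>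
    \<le> 2 ^ r * (K * (\<tau> * V) powr s)"
  unfolding fwd_diff_commute[of _ \<tau> r 1]
proof (rule abs_fwd_diff_le)
  fix l assume "l \<le> r"
  have "\<bar>fwd_diff (Lambda_order s) \<tau> (\<lambda>t. f (a (real l) + t *\<^sub>R v (real l))) t0\<bar>
      \<le> K * (\<tau> * norm (v (real l))) powr s"
    using Lambda_bound_line[OF assms(1), of \<tau> "a (real l)" "v (real l)" t0] \<open>0 \<le> \<tau>\<close>
    by (simp del: fwd_diff.simps)
  also have "\<dots> \<le> K * (\<tau> * V) powr s"
    using Lambda_bound_nonneg[OF assms(1)] assms(2,3) v[OF \<open>l \<le> r\<close>]
    by (intro mult_left_mono powr_mono2) auto
  finally show "\<bar>fwd_diff (Lambda_order s) \<tau> (\<lambda>t. f (a (0 + real l * 1) + t *\<^sub>R v (0 + real l * 1))) t0\<bar>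
      \<le> K * (\<tau> * V) powr s"
    by (simp del: fwd_diff.simps)
qed

lemma fwd_diff_translate_sdiff_pow_bound:
  assumes "Lambda_bound s K f" "0 \<le> s" "0 \<le> \<tau>"
  shows "\<bar>fwd_diff (Lambda_order s) \<tau> (\<lambda>t. sdiff_pow r h f (z + t *\<^sub>R e)) t0\<bar>
    \<le> 2 ^ r * (K * (\<tau> * norm e) powr s)"
proof -
  have "(\<lambda>t. sdiff_pow r h f (z + t *\<^sub>R e))
      = (\<lambda>t. fwd_diff r 1 (\<lambda>\<sigma>. f ((z + (\<sigma> - real r / 2) *\<^sub>R h) + t *\<^sub>R e)) 0)"
    by (simp only: sdiff_pow_eq_fwd_diff add_ac)
  then show ?thesis
    using fwd_diff_sdiff_family_bound[OF assms, of r "\<lambda>_. e" "norm e"] by simp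
qed

lemma fwd_diff_dilate_sdiff_pow_bound:
  assumes "Lambda_bound s K f" "0 \<le> s" "0 \<le> \<tau>"
  shows "\<bar>fwd_diff (Lambda_order s) \<tau> (\<lambda>t. sdiff_pow r (t *\<^sub>R e) f z) t0\<bar>
    \<le> 2 ^ r * (K * (\<tau> * (real r * norm e)) powr s)"
proof -
  have "(\<lambda>t. sdiff_pow r (t *\<^sub>R e) f z)
      = (\<lambda>t. fwd_diff r 1 (\<lambda>\<sigma>. f (z + t *\<^sub>R ((\<sigma> - real r / 2) *\<^sub>R e))) 0)"
    by (simp only: sdiff_pow_eq_fwd_diff scaleR_scaleR mult.commute)
  moreover have "norm ((real l - real r / 2) *\<^sub>R e) \<le> real r * norm e" if "l \<le> r" for l
    using that by (simp add: mult_right_mono)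
  ultimately show ?thesis
    using fwd_diff_sdiff_family_bound[OF assms, of r "\<lambda>\<sigma>. (\<sigma> - real r / 2) *\<^sub>R e" "real r * norm e"]
    by simp
qed

lemma two_le_Lambda_order: "1 \<le> s \<Longrightarrow> 2 \<le> Lambda_order s"
  by (simp add: le_nat_iff le_floor_iff)

lemma sdiff_pow_translate_bound:
  assumes C: "marchaud_constant (Lambda_order s) s C" and f: "Lambda_bound s K f"
    and "1 \<le> s" "Lambda_order s \<le> r" "norm \<delta> \<le> norm h"
  shows "\<bar>sdiff_pow r h f (z + \<delta>) - sdiff_pow r h f z\<bar>
    \<le> C * (2 ^ (r - Lambda_order s) + 2 ^ r) * K * modulus_term s (norm \<delta>) (norm h)"
proof (cases "\<delta> = 0")
  case True
  then show ?thesis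
    using Lambda_bound_nonneg[OF f] modulus_term_nonneg[of 0 "norm h" s] C
    by (simp add: marchaud_constant_def)
next
  case False
  define m where "m = Lambda_order s"
  define \<beta> where "\<beta> = norm \<delta>"
  define X where "X = norm h"
  define e where "e = (1 / \<beta>) *\<^sub>R \<delta>"
  define w where "w = (\<lambda>t. sdiff_pow r h f (z + t *\<^sub>R e))"
  have \<beta>: "0 < \<beta>" "\<beta> \<le> X" "\<beta> *\<^sub>R e = \<delta>" "norm e = 1"
    using False \<open>norm \<delta> \<le> norm h\<close> by (simp_all add: \<beta>_def X_def e_def)
  have K: "0 \<le> K" using Lambda_bound_nonneg[OF f] .
  have "\<bar>w t\<bar> \<le> 2 ^ (r - m) * (K * X powr s)" for t
    using abs_sdiff_pow_Lambda_bound[OF f assms(4)] by (simp add: w_def X_def m_def)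
  moreover have "\<bar>fwd_diff m \<tau> w t\<bar> \<le> 2 ^ r * K * \<tau> powr s" if "0 \<le> \<tau>" for \<tau> t
    using fwd_diff_translate_sdiff_pow_bound[OF f _ that, of r h z e t] \<open>1 \<le> s\<close> \<beta>(4)
    by (simp add: w_def m_def mult.assoc)
  ultimately have "marchaud_hyps m s w X (2 ^ (r - m) * (K * X powr s)) (2 ^ r * K) 0"
    using \<beta> K by (simp add: marchaud_hyps_def)
  from marchaud_constantD[OF C[folded m_def] this \<beta>(1,2)]
  have "\<bar>w \<beta> - w 0\<bar> \<le> C * (\<beta> / X * (2 ^ (r - m) * (K * X powr s)) + 2 ^ r * K * modulus_term s \<beta> X)"
    by simp
  also have "\<beta> / X * (2 ^ (r - m) * (K * X powr s)) = 2 ^ (r - m) * K * (\<beta> * X powr (s - 1))"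
    using \<beta> by (simp add: powr_diff field_simps)
  also have "C * (\<dots> + 2 ^ r * K * modulus_term s \<beta> X)
      \<le> C * (2 ^ (r - m) * K * modulus_term s \<beta> X + 2 ^ r * K * modulus_term s \<beta> X)"
    using \<beta> K marchaud_constant_nonneg[OF C]
    by (intro mult_left_mono add_right_mono modulus_term_ge) auto
  finally show ?thesis
    unfolding \<beta>_def[symmetric] X_def[symmetric] m_def[symmetric]
    by (simp add: w_def \<beta>(3) algebra_simps)
qed

lemma sdiff_pow_dilate_near_bound:
  fixes f :: "'a::real_normed_vector \<Rightarrow> real" and s :: real
  defines "m \<equiv> Lambda_order s"
  assumes C: "marchaud_constant m s C" and f: "Lambda_bound s K f" and "1 \<le> s" "m \<le> r"
    and "norm e = 1" and L: "real (m * m + m) \<le> L" and y: "0 < y1" "y1 < y2" "L * (y2 - y1) \<le> y1"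
  shows "\<bar>sdiff_pow r (y2 *\<^sub>R e) f z - sdiff_pow r (y1 *\<^sub>R e) f z\<bar>
    \<le> C * (L * 2 ^ (r - m) * 2 powr s + 2 ^ r * real r powr s) * K * modulus_term s (y2 - y1) y2"
proof -
  define w where "w = (\<lambda>t. sdiff_pow r (t *\<^sub>R e) f z)"
  define X where "X = y1 / L"
  define M where "M = 2 ^ (r - m) * (K * (2 * y1) powr s)"
  have K: "0 \<le> K" using Lambda_bound_nonneg[OF f] .
  have M_eq: "M = 2 ^ (r - m) * K * 2 powr s * y1 * y1 powr (s - 1)"
    using y by (simp add: M_def powr_mult powr_mult_base)
  have "2 \<le> m * m + m" using two_le_Lambda_order[OF \<open>1 \<le> s\<close>] unfolding m_def by linarith
  then have "2 \<le> L" using L by linarith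
  have "y1 / L \<le> y1 / 1" by (rule divide_left_mono) (use y \<open>2 \<le> L\<close> in auto)
  then have X: "0 < X" "X \<le> y2" "L * X = y1" using y \<open>2 \<le> L\<close> by (auto simp: X_def)
  have "y2 - y1 \<le> X" using y(3) \<open>2 \<le> L\<close> by (simp add: X_def pos_le_divide_eq mult.commute)
  have "\<bar>w t\<bar> \<le> M" if "t \<in> {y1..y1 + L * X}" for t
  proof -
    have "\<bar>w t\<bar> \<le> 2 ^ (r - m) * (K * t powr s)"
      using abs_sdiff_pow_Lambda_bound[OF f, of r "t *\<^sub>R e" z] that y \<open>m \<le> r\<close> \<open>norm e = 1\<close>
      by (simp add: w_def m_def)
    also have "\<dots> \<le> M"
      unfolding M_def using that X y K \<open>1 \<le> s\<close> by (intro mult_left_mono powr_mono2) auto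
    finally show ?thesis .
  qed
  moreover have "\<bar>fwd_diff m \<tau> w t\<bar> \<le> 2 ^ r * (K * real r powr s) * \<tau> powr s" if "0 \<le> \<tau>" for \<tau> t
    using fwd_diff_dilate_sdiff_pow_bound[OF f _ that, of r e z t] \<open>1 \<le> s\<close> \<open>norm e = 1\<close> that
    by (simp add: w_def m_def powr_mult ac_simps)
  moreover have "real (m * m + m) * X \<le> L * X" using L X by (intro mult_right_mono) auto
  ultimately have "marchaud_hyps m s w X M (2 ^ r * (K * real r powr s)) y1"
    using X K by (auto simp: marchaud_hyps_def M_def)
  from marchaud_constantD[OF C this, of "y2 - y1"] y \<open>y2 - y1 \<le> X\<close>
  have "\<bar>w y2 - w y1\<bar>
      \<le> C * ((y2 - y1) / X * M + 2 ^ r * (K * real r powr s) * modulus_term s (y2 - y1) X)"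
    by simp
  also have "(y2 - y1) / X * M = L * 2 ^ (r - m) * 2 powr s * K * ((y2 - y1) * y1 powr (s - 1))"
    using y \<open>2 \<le> L\<close> M_eq by (simp add: X_def)
  also have "C * (\<dots> + 2 ^ r * (K * real r powr s) * modulus_term s (y2 - y1) X)
      \<le> C * (L * 2 ^ (r - m) * 2 powr s * K * modulus_term s (y2 - y1) y2
        + 2 ^ r * (K * real r powr s) * modulus_term s (y2 - y1) y2)"
    using marchaud_constant_nonneg[OF C] \<open>2 \<le> L\<close> K X y \<open>1 \<le> s\<close>
    by (intro mult_left_mono add_mono order_trans[OF _ modulus_term_ge] powr_mono2 modulus_term_mono)
      auto
  finally show ?thesis by (simp add: w_def algebra_simps)
qed

lemma sdiff_pow_dilate_far_bound:
  assumes f: "Lambda_bound s K f" and "Lambda_order s \<le> r" "1 \<le> s" "norm e = 1"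
    and y: "0 < y1" "y1 \<le> y2" "y2 \<le> c * (y2 - y1)"
  shows "\<bar>sdiff_pow r (y2 *\<^sub>R e) f z - sdiff_pow r (y1 *\<^sub>R e) f z\<bar>
    \<le> 2 * 2 ^ (r - (Lambda_order s)) * c * K * modulus_term s (y2 - y1) y2"
proof -
  define A where "A = 2 ^ (r - (Lambda_order s)) * K"
  have A: "0 \<le> A" using Lambda_bound_nonneg[OF f] by (simp add: A_def)
  have "0 < c * (y2 - y1)" using y by linarith
  then have c: "0 \<le> c" using y by (simp add: zero_less_mult_iff)
  have "\<bar>sdiff_pow r (y *\<^sub>R e) f z\<bar> \<le> A * y2 powr s" if "0 \<le> y" "y \<le> y2" for y
  proof -
    have "\<bar>sdiff_pow r (y *\<^sub>R e) f z\<bar> \<le> A * y powr s"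
      using abs_sdiff_pow_Lambda_bound[OF f assms(2), of "y *\<^sub>R e" z] that \<open>norm e = 1\<close>
      by (simp add: A_def mult.assoc)
    also have "\<dots> \<le> A * y2 powr s"
      using that A \<open>1 \<le> s\<close> by (intro mult_left_mono powr_mono2) auto
    finally show ?thesis .
  qed
  then have "\<bar>sdiff_pow r (y2 *\<^sub>R e) f z\<bar> \<le> A * y2 powr s" "\<bar>sdiff_pow r (y1 *\<^sub>R e) f z\<bar> \<le> A * y2 powr s"
    using y by auto
  moreover have "A * y2 powr s = A * (y2 * y2 powr (s - 1))" using y by (simp add: powr_mult_base)
  ultimately have "\<bar>sdiff_pow r (y2 *\<^sub>R e) f z - sdiff_pow r (y1 *\<^sub>R e) f z\<bar>
      \<le> 2 * A * (y2 * y2 powr (s - 1))"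
    by linarith
  also have "\<dots> \<le> 2 * A * (c * ((y2 - y1) * y2 powr (s - 1)))"
    using y A c by (intro mult_left_mono) (auto simp flip: mult.assoc intro: mult_right_mono)
  also have "\<dots> \<le> 2 * A * (c * modulus_term s (y2 - y1) y2)"
    using y A c by (intro mult_left_mono modulus_term_ge) auto
  finally show ?thesis by (simp add: A_def ac_simps)
qed

lemma sdiff_pow_dilate_bound:
  fixes f :: "'a::real_normed_vector \<Rightarrow> real" and s :: real
  defines "m \<equiv> Lambda_order s"
  assumes C: "marchaud_constant m s C" and f: "Lambda_bound s K f" and "1 \<le> s" "m \<le> r"
    and "norm e = 1" and "0 < y1" "y1 \<le> y2"
  shows "\<bar>sdiff_pow r (y2 *\<^sub>R e) f z - sdiff_pow r (y1 *\<^sub>R e) f z\<bar>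
    \<le> (C * (real (m * m + m) * 2 ^ (r - m) * 2 powr s + 2 ^ r * real r powr s)
        + 2 * 2 ^ (r - m) * (real (m * m + m) + 1)) * K * modulus_term s (y2 - y1) y2"
    (is "_ \<le> (?C1 + ?C2) * K * ?mt")
proof -
  define L where "L = real (m * m + m)"
  have "0 \<le> ?C1" "0 \<le> ?C2" using marchaud_constant_nonneg[OF C] by simp_all
  moreover have "0 \<le> K * ?mt"
    using Lambda_bound_nonneg[OF f] \<open>y1 \<le> y2\<close> \<open>0 < y1\<close>
    by (intro mult_nonneg_nonneg modulus_term_nonneg) auto
  ultimately have "?C1 * (K * ?mt) \<le> (?C1 + ?C2) * (K * ?mt)" "?C2 * (K * ?mt) \<le> (?C1 + ?C2) * (K * ?mt)"
    "0 \<le> (?C1 + ?C2) * (K * ?mt)"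
    by (auto intro: mult_right_mono)
  then have le: "?C1 * K * ?mt \<le> (?C1 + ?C2) * K * ?mt" "?C2 * K * ?mt \<le> (?C1 + ?C2) * K * ?mt"
    "0 \<le> (?C1 + ?C2) * K * ?mt"
    by (simp_all only: mult.assoc)
  \<comment> \<open>Marchaud's inequality on [y1, 2 y1] at scale y1 / L needs L (y2 - y1) <= y1; otherwise
    y2 <= (L + 1) (y2 - y1), and the crude bound by y2^s is good enough.\<close>
  consider "y1 = y2" | "y1 < y2" "L * (y2 - y1) \<le> y1" | "y1 < L * (y2 - y1)"
    using \<open>y1 \<le> y2\<close> by linarith
  then show ?thesis
  proof cases
    case 1
    then show ?thesis using le(3) by simp
  next
    case 2
    have "L * (y2 - y1) \<le> y1" "real (m * m + m) \<le> L" using 2 by (simp_all add: L_def)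
    from sdiff_pow_dilate_near_bound[OF C[unfolded m_def] f assms(4-6)[unfolded m_def]
        this(2)[unfolded m_def]
        \<open>0 < y1\<close> _ this(1), folded m_def] 2
    have "\<bar>sdiff_pow r (y2 *\<^sub>R e) f z - sdiff_pow r (y1 *\<^sub>R e) f z\<bar> \<le> ?C1 * K * ?mt"
      unfolding L_def by simp
    then show ?thesis using le(1) by (rule order_trans)
  next
    case 3
    then have "y2 \<le> (L + 1) * (y2 - y1)" by (simp add: algebra_simps)
    from sdiff_pow_dilate_far_bound[OF f assms(5)[unfolded m_def] assms(4,6-8) this, folded m_def]
    have "\<bar>sdiff_pow r (y2 *\<^sub>R e) f z - sdiff_pow r (y1 *\<^sub>R e) f z\<bar> \<le> ?C2 * K * ?mt"
      unfolding L_def .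
    then show ?thesis using le(2) by (rule order_trans)
  qed
qed

lemma modulus_bound_commute: "modulus_bound s dx y y' = modulus_bound s dx y' y"
  by (simp add: modulus_bound_def Let_def abs_minus_commute add.commute)

lemma modulus_terms_le_modulus_bound:
  assumes "1 \<le> s" "0 < y'" "y' \<le> y" "0 \<le> dx" "0 \<le> C1" "0 \<le> C2" "0 \<le> K"
  shows "C1 * K * modulus_term s dx y + C2 * K * modulus_term s (y - y') y
    \<le> (C1 + C2) * K * modulus_bound s dx y y'"
proof -
  define mx where "mx = modulus_term s dx (y + y')"
  define my where "my = modulus_term s (y - y') (y + y')"
  have "C1 * K * modulus_term s dx y \<le> C1 * K * mx" "C2 * K * modulus_term s (y - y') y \<le> C2 * K * my"
    unfolding mx_def my_def using assms by (intro mult_left_mono modulus_term_mono; simp)+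
  moreover have "C1 * K * mx + C2 * K * my \<le> (C1 + C2) * K * (mx + my)"
    using assms modulus_term_nonneg[of dx "y + y'" s] modulus_term_nonneg[of "y - y'" "y + y'" s]
    by (simp add: mx_def my_def algebra_simps)
  moreover have "modulus_bound s dx y y' = mx + my"
    using assms by (simp add: modulus_bound_eq_modulus_term mx_def my_def)
  ultimately show ?thesis by simp
qed

lemma sdiff_pow_two_point_bound_ge_1:
  assumes "1 \<le> s" "Lambda_order s \<le> r"
  shows "\<exists>C. \<forall>K (f::'a::real_normed_vector \<Rightarrow> real) x x' y y' e.
    Lambda_bound s K f \<longrightarrow> norm e = 1 \<longrightarrow> 0 < y \<longrightarrow> 0 < y' \<longrightarrow> dist x x' \<le> max y y' \<longrightarrow>
    \<bar>sdiff_pow r (y *\<^sub>R e) f x - sdiff_pow r (y' *\<^sub>R e) f x'\<bar> \<le> C * K * modulus_bound s (dist x x') y y'"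
proof -
  define m where "m = Lambda_order s"
  obtain C0 where C0: "marchaud_constant m s C0"
    using marchaud_inequality[OF two_le_Lambda_order assms(1)] assms(1) unfolding m_def by blast
  define C1 where "C1 = C0 * (2 ^ (r - m) + 2 ^ r)"
  define C2 where "C2 = C0 * (real (m * m + m) * 2 ^ (r - m) * 2 powr s + 2 ^ r * real r powr s)
    + 2 * 2 ^ (r - m) * (real (m * m + m) + 1)"
  have "0 \<le> C1" "0 \<le> C2" using marchaud_constant_nonneg[OF C0] by (simp_all add: C1_def C2_def)
  have le: "\<bar>sdiff_pow r (y *\<^sub>R e) f x - sdiff_pow r (y' *\<^sub>R e) f x'\<bar>
      \<le> (C1 + C2) * K * modulus_bound s (dist x x') y y'"
    if f: "Lambda_bound s K f" and e: "norm e = 1" and y: "0 < y'" "y' \<le> y" and "dist x x' \<le> y"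
    for K and f :: "'a \<Rightarrow> real" and x x' y y' e
  proof -
    have "\<bar>sdiff_pow r (y *\<^sub>R e) f (x' + (x - x')) - sdiff_pow r (y *\<^sub>R e) f x'\<bar>
        \<le> C1 * K * modulus_term s (dist x x') y"
      using sdiff_pow_translate_bound[OF C0[unfolded m_def] f assms,
          where \<delta> = "x - x'" and h = "y *\<^sub>R e" and z = x']
        that by (simp add: C1_def m_def dist_norm)
    moreover have "\<bar>sdiff_pow r (y *\<^sub>R e) f x' - sdiff_pow r (y' *\<^sub>R e) f x'\<bar>
        \<le> C2 * K * modulus_term s (y - y') y"
      using sdiff_pow_dilate_bound[OF C0[unfolded m_def] f assms e y, of x'] by (simp add: C2_def m_def)
    moreover have "C1 * K * modulus_term s (dist x x') y + C2 * K * modulus_term s (y - y') y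
        \<le> (C1 + C2) * K * modulus_bound s (dist x x') y y'"
      using assms(1) y \<open>0 \<le> C1\<close> \<open>0 \<le> C2\<close> Lambda_bound_nonneg[OF f]
      by (intro modulus_terms_le_modulus_bound) auto
    moreover have "\<bar>sdiff_pow r (y *\<^sub>R e) f x - sdiff_pow r (y' *\<^sub>R e) f x'\<bar>
        \<le> \<bar>sdiff_pow r (y *\<^sub>R e) f x - sdiff_pow r (y *\<^sub>R e) f x'\<bar>
          + \<bar>sdiff_pow r (y *\<^sub>R e) f x' - sdiff_pow r (y' *\<^sub>R e) f x'\<bar>"
      by arith
    ultimately show ?thesis by simp
  qed
  have "\<bar>sdiff_pow r (y *\<^sub>R e) f x - sdiff_pow r (y' *\<^sub>R e) f x'\<bar>
      \<le> (C1 + C2) * K * modulus_bound s (dist x x') y y'"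
    if "Lambda_bound s K f" "norm e = 1" "0 < y" "0 < y'" "dist x x' \<le> max y y'"
    for K and f :: "'a \<Rightarrow> real" and x x' y y' e
  proof (cases "y' \<le> y")
    case True
    then show ?thesis using le that by (simp add: max_def)
  next
    case False
    then show ?thesis
      using le[where y = y' and y' = y and x = x' and x' = x] that
      by (simp add: max_def dist_commute abs_minus_commute modulus_bound_commute)
  qed
  then show ?thesis by blast
qed

lemma Lambda_bound_holder:
  assumes "Lambda_bound s K f" "0 \<le> s" "s < 1"
  shows "\<bar>f a - f b\<bar> \<le> K * dist a b powr s"
proof -
  have "nat \<lfloor>s\<rfloor> = 0" using assms(2,3) by (simp add: floor_eq_iff)
  then show ?thesis
    using Lambda_bound_line[OF assms(1), of 1 b "a - b" 0] by (simp add: dist_norm)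
qed

lemma powr_add_mult_le:
  fixes a b c s :: real
  assumes "0 \<le> a" "0 \<le> b" "0 \<le> c" "0 < s"
  shows "(a + c * b) powr s \<le> (1 + c) powr s * (a powr s + b powr s)"
proof -
  have "c * b \<le> c * max a b" using assms by (intro mult_left_mono) auto
  then have "a + c * b \<le> (1 + c) * max a b"
    using max.cobounded1[of a b] by (simp add: algebra_simps)
  then have "(a + c * b) powr s \<le> (1 + c) powr s * max a b powr s"
    using assms by (simp add: powr_mono2 flip: powr_mult)
  also have "max a b powr s \<le> a powr s + b powr s"
    by (simp add: max_def)
  finally show ?thesis using assms by (simp add: mult_left_mono)
qed

lemma sdiff_pow_two_point_bound_lt_1:
  assumes f: "Lambda_bound s K f" and s: "0 < s" "s < 1" and e: "norm e = 1"
  shows "\<bar>sdiff_pow r (y *\<^sub>R e) f x - sdiff_pow r (y' *\<^sub>R e) f x'\<bar>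
    \<le> 2 ^ r * (1 + real r) powr s * K * modulus_bound s (dist x x') y y'"
proof -
  define d where "d = dist x x' + real r * \<bar>y - y'\<bar>"
  have "sdiff_pow r (y *\<^sub>R e) f x - sdiff_pow r (y' *\<^sub>R e) f x'
      = fwd_diff r 1 (\<lambda>\<sigma>. f (x + (\<sigma> - real r / 2) *\<^sub>R y *\<^sub>R e) - f (x' + (\<sigma> - real r / 2) *\<^sub>R y' *\<^sub>R e)) 0"
    by (simp only: sdiff_pow_eq_fwd_diff fwd_diff_minus)
  also have "\<bar>\<dots>\<bar> \<le> 2 ^ r * (K * d powr s)"
  proof (rule abs_fwd_diff_le)
    fix l assume "l \<le> r"
    define c where "c = real l - real r / 2"
    have "dist (x + c *\<^sub>R y *\<^sub>R e) (x' + c *\<^sub>R y' *\<^sub>R e) = norm ((x - x') + (c * (y - y')) *\<^sub>R e)"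
      by (simp add: dist_norm algebra_simps)
    also have "\<dots> \<le> d"
    proof -
      have "\<bar>c\<bar> \<le> real r" using \<open>l \<le> r\<close> by (simp add: c_def)
      then have "\<bar>c\<bar> * \<bar>y - y'\<bar> \<le> real r * \<bar>y - y'\<bar>" by (rule mult_right_mono) simp
      then show ?thesis
        using norm_triangle_ineq[of "x - x'" "(c * (y - y')) *\<^sub>R e"] e
        by (simp add: d_def dist_norm abs_mult)
    qed
    finally have "K * dist (x + c *\<^sub>R y *\<^sub>R e) (x' + c *\<^sub>R y' *\<^sub>R e) powr s \<le> K * d powr s"
      using Lambda_bound_nonneg[OF f] s by (intro mult_left_mono powr_mono2) auto
    then show "\<bar>f (x + (0 + real l * 1 - real r / 2) *\<^sub>R y *\<^sub>R e)
        - f (x' + (0 + real l * 1 - real r / 2) *\<^sub>R y' *\<^sub>R e)\<bar> \<le> K * d powr s"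
      using Lambda_bound_holder[OF f, of "x + c *\<^sub>R y *\<^sub>R e" "x' + c *\<^sub>R y' *\<^sub>R e"] s
      by (simp add: c_def)
  qed
  also have "\<dots> \<le> 2 ^ r * (K * ((1 + real r) powr s * (dist x x' powr s + \<bar>y - y'\<bar> powr s)))"
    using powr_add_mult_le[of "dist x x'" "\<bar>y - y'\<bar>" "real r" s] s Lambda_bound_nonneg[OF f]
    by (simp add: d_def mult_left_mono)
  finally show ?thesis using s by (simp add: modulus_bound_def Let_def ac_simps)
qed

lemma sdiff_pow_two_point_bound:
  assumes "0 < s" "s < real r"
  shows "\<exists>C. \<forall>K (f::'a::real_normed_vector \<Rightarrow> real) x x' y y' e.
    Lambda_bound s K f \<longrightarrow> norm e = 1 \<longrightarrow> 0 < y \<longrightarrow> 0 < y' \<longrightarrow> (1 \<le> s \<longrightarrow> dist x x' \<le> max y y') \<longrightarrow>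
    \<bar>sdiff_pow r (y *\<^sub>R e) f x - sdiff_pow r (y' *\<^sub>R e) f x'\<bar> \<le> C * K * modulus_bound s (dist x x') y y'"
proof (cases "s < 1")
  case True
  then show ?thesis
    using sdiff_pow_two_point_bound_lt_1[OF _ assms(1)] by blast
next
  case False
  have "\<lfloor>s\<rfloor> < int r" "0 \<le> \<lfloor>s\<rfloor>" using assms False by (simp_all add: floor_less_iff)
  then have "Lambda_order s \<le> r" by linarith
  then show ?thesis
    using sdiff_pow_two_point_bound_ge_1[of s r] False by simp
qed

section \<open>Suprema over spheres and the Lambda_s norm\<close>

lemma abs_sdiff_pow_le_Delta_k:
  assumes "\<And>z. \<bar>f z\<bar> \<le> B" "norm h = y"
  shows "\<bar>sdiff_pow k h f x\<bar> \<le> Delta_k k f x y"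
proof -
  have "bdd_above ((\<lambda>h. \<bar>sdiff_pow k h f x\<bar>) ` {h. norm h = y})"
    by (rule bdd_aboveI2) (rule abs_sdiff_pow_le[OF assms(1)])
  then show ?thesis
    unfolding Delta_k_def using assms(2) by (intro cSUP_upper) auto
qed

lemma Delta_k_le_add:
  fixes f :: "'a::{real_normed_vector, perfect_space} \<Rightarrow> real"
  assumes bounded: "\<And>z. \<bar>f z\<bar> \<le> B" and "0 < y" "0 < y'"
    and diff: "\<And>e. norm e = 1 \<Longrightarrow> \<bar>sdiff_pow r (y *\<^sub>R e) f x - sdiff_pow r (y' *\<^sub>R e) f x'\<bar> \<le> E"
  shows "Delta_k r f x y \<le> Delta_k r f x' y' + E"
  unfolding Delta_k_def[of r f x y]
proof (rule cSUP_least)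
  obtain h :: 'a where "norm h = y"
    using vector_choose_size \<open>0 < y\<close> less_imp_le by blast
  then show "{h::'a. norm h = y} \<noteq> {}" by blast
next
  fix h :: 'a assume "h \<in> {h. norm h = y}"
  define e where "e = (1 / y) *\<^sub>R h"
  have e: "y *\<^sub>R e = h" "norm e = 1"
    using \<open>h \<in> {h. norm h = y}\<close> \<open>0 < y\<close> by (auto simp: e_def)
  have "\<bar>sdiff_pow r (y' *\<^sub>R e) f x'\<bar> \<le> Delta_k r f x' y'"
    using \<open>0 < y'\<close> e(2) by (intro abs_sdiff_pow_le_Delta_k[OF bounded]) simp
  moreover have "\<bar>sdiff_pow r h f x - sdiff_pow r (y' *\<^sub>R e) f x'\<bar> \<le> E"
    using diff[OF e(2)] unfolding e(1) .
  ultimately show "\<bar>sdiff_pow r h f x\<bar> \<le> Delta_k r f x' y' + E"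
    by linarith
qed

lemma abs_Delta_k_diff_le:
  fixes f :: "'a::{real_normed_vector, perfect_space} \<Rightarrow> real"
  assumes "\<And>z. \<bar>f z\<bar> \<le> B" and "0 < y" "0 < y'"
    and "\<And>e. norm e = 1 \<Longrightarrow> \<bar>sdiff_pow r (y *\<^sub>R e) f x - sdiff_pow r (y' *\<^sub>R e) f x'\<bar> \<le> E"
  shows "\<bar>Delta_k r f x y - Delta_k r f x' y'\<bar> \<le> E"
proof -
  have "Delta_k r f x y \<le> Delta_k r f x' y' + E"
    using assms by (rule Delta_k_le_add)
  moreover have "Delta_k r f x' y' \<le> Delta_k r f x y + E"
    using assms(1,3,2) by (rule Delta_k_le_add) (use assms(4) in \<open>simp add: abs_minus_commute\<close>)
  ultimately show ?thesis by linarith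
qed

lemma Lambda_space_abs_le:
  assumes "f \<in> Lambda_space s"
  shows "\<bar>f x\<bar> \<le> (SUP x. \<bar>f x\<bar>)"
proof -
  obtain a where "\<And>x. \<bar>f x\<bar> \<le> a"
    using assms unfolding Lambda_space_def bounded_real by auto
  then have "bdd_above (range (\<lambda>x. \<bar>f x\<bar>))" by (intro bdd_aboveI2)
  then show ?thesis by (intro cSUP_upper) auto
qed

lemma Lambda_space_sdiff_pow_le:
  assumes f: "f \<in> Lambda_space s" and h: "0 < norm h" "norm h \<le> 1"
  shows "\<bar>sdiff_pow (Lambda_order s) h f x\<bar> \<le> Sup (holder_seminorm_set s f) * norm h powr s"
proof -
  have "Delta_k (Lambda_order s) f x (norm h) / norm h powr s \<in> holder_seminorm_set s f"
    unfolding holder_seminorm_set_def using h by blast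
  then have "Delta_k (Lambda_order s) f x (norm h) / norm h powr s \<le> Sup (holder_seminorm_set s f)"
    using f unfolding Lambda_space_def by (intro cSup_upper) auto
  then have "Delta_k (Lambda_order s) f x (norm h) \<le> Sup (holder_seminorm_set s f) * norm h powr s"
    using h by (simp add: divide_le_eq)
  with abs_sdiff_pow_le_Delta_k[OF Lambda_space_abs_le[OF f] refl] show ?thesis
    by (rule order_trans)
qed

lemma Lambda_space_imp_Lambda_bound:
  fixes f :: "'a::{real_normed_vector, perfect_space} \<Rightarrow> real"
  assumes f: "f \<in> Lambda_space s" and "0 < s"
  shows "Lambda_bound s (2 ^ (Lambda_order s) * Lambda_norm s f) f"
proof -
  define A where "A = Sup (holder_seminorm_set s f)"
  define B where "B = (SUP x. \<bar>f x\<bar>)"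
  define K where "K = 2 ^ (Lambda_order s) * (B + A)"
  have fB: "\<bar>f x\<bar> \<le> B" for x using Lambda_space_abs_le[OF f] by (simp add: B_def)
  obtain u :: 'a where "norm u = 1" using vector_choose_size zero_le_one by blast
  then have "0 \<le> A" using Lambda_space_sdiff_pow_le[OF f, of u 0] by (simp add: A_def)
  moreover have "0 \<le> B" using fB[of 0] by simp
  moreover have "(1::real) \<le> 2 ^ (Lambda_order s)" by (rule one_le_power) simp
  ultimately have "B + A \<le> K"
    using mult_right_mono[of 1 "2 ^ (Lambda_order s)" "B + A"] by (simp add: K_def)
  then have "0 \<le> K" "B \<le> K" "A \<le> K" using \<open>0 \<le> A\<close> \<open>0 \<le> B\<close> by linarith+
  have "2 ^ (Lambda_order s) * B \<le> K" using \<open>0 \<le> A\<close> by (simp add: K_def algebra_simps)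
  have "\<bar>sdiff_pow (Lambda_order s) h f x\<bar> \<le> K * norm h powr s" for h x
  proof -
    consider "h = 0" | "0 < norm h" "norm h \<le> 1" | "1 < norm h" by force
    then show ?thesis
    proof cases
      case 1
      then show ?thesis by (simp add: sdiff_pow_Suc_zero del: sdiff_pow.simps)
    next
      case 2
      then have "\<bar>sdiff_pow (Lambda_order s) h f x\<bar> \<le> A * norm h powr s"
        using Lambda_space_sdiff_pow_le[OF f] by (simp add: A_def)
      also have "\<dots> \<le> K * norm h powr s" using \<open>A \<le> K\<close> by (rule mult_right_mono) simp
      finally show ?thesis .
    next
      case 3
      then have "1 \<le> norm h powr s" using \<open>0 < s\<close> by (intro ge_one_powr_ge_zero) auto
      have "\<bar>sdiff_pow (Lambda_order s) h f x\<bar> \<le> 2 ^ (Lambda_order s) * B"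
        using fB by (rule abs_sdiff_pow_le)
      also have "\<dots> \<le> K * 1" using \<open>2 ^ (Lambda_order s) * B \<le> K\<close> by simp
      also have "\<dots> \<le> K * norm h powr s" using \<open>1 \<le> norm h powr s\<close> \<open>0 \<le> K\<close> by (rule mult_left_mono)
      finally show ?thesis .
    qed
  qed
  moreover have "K = 2 ^ (Lambda_order s) * Lambda_norm s f"
    by (simp add: K_def Lambda_norm_def A_def B_def)
  ultimately show ?thesis
    unfolding Lambda_bound_def using order_trans[OF fB \<open>B \<le> K\<close>] by auto
qed

theorem mainTheorem5:
  fixes s :: real and r :: nat
  assumes "0 < s" and "real r > s"
  shows "\<exists>C. \<forall>f \<in> (Lambda_space s :: (real^'n \<Rightarrow> real) set). \<forall>x x' :: real^'n. \<forall>y y' :: real.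
           0 < y \<and> y \<le> 1 \<and> 0 < y' \<and> y' \<le> 1 \<and> (s \<ge> 1 \<longrightarrow> dist x x' \<le> max y y') \<longrightarrow>
           \<bar>Delta_k r f x y - Delta_k r f x' y'\<bar>
             \<le> C * Lambda_norm s f * modulus_bound s (dist x x') y y'"
proof -
  define m where "m = Lambda_order s"
  obtain C where C: "\<And>K (f :: real^'n \<Rightarrow> real) x x' y y' e. Lambda_bound s K f \<Longrightarrow> norm e = 1 \<Longrightarrow>
      0 < y \<Longrightarrow> 0 < y' \<Longrightarrow> (1 \<le> s \<longrightarrow> dist x x' \<le> max y y') \<Longrightarrow>
      \<bar>sdiff_pow r (y *\<^sub>R e) f x - sdiff_pow r (y' *\<^sub>R e) f x'\<bar> \<le> C * K * modulus_bound s (dist x x') y y'"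
    using sdiff_pow_two_point_bound[OF assms] by blast
  show ?thesis
  proof (intro exI[of _ "C * 2 ^ m"] ballI allI impI)
    fix f :: "real^'n \<Rightarrow> real" and x x' :: "real^'n" and y y' :: real
    assume "f \<in> Lambda_space s"
      and hyps: "0 < y \<and> y \<le> 1 \<and> 0 < y' \<and> y' \<le> 1 \<and> (s \<ge> 1 \<longrightarrow> dist x x' \<le> max y y')"
    then have f: "Lambda_bound s (2 ^ m * Lambda_norm s f) f"
      using Lambda_space_imp_Lambda_bound assms(1) by (simp add: m_def)
    have "\<bar>Delta_k r f x y - Delta_k r f x' y'\<bar>
        \<le> C * (2 ^ m * Lambda_norm s f) * modulus_bound s (dist x x') y y'"
      using f hyps C[OF f] by (intro abs_Delta_k_diff_le[of f]) (auto simp: Lambda_bound_def)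
    then show "\<bar>Delta_k r f x y - Delta_k r f x' y'\<bar>
        \<le> C * 2 ^ m * Lambda_norm s f * modulus_bound s (dist x x') y y'"
      by (simp add: ac_simps)
  qed
qed

end
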